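(* Let $n\ge 1$, let $B_1,\dots,B_n$ be independent real-valued service times with finite means $\mu_i$ and variances $\sigma_i^2$, and let $\omega\in(0,1)$. Assume $B_1\le_{\mathrm{dil}}B_2\le_{\mathrm{dil}}\cdots\le_{\mathrm{dil}}B_n$. Then $$\varrho_\omega=\frac{C(\mathrm{Id},\boldsymbol\mu,\omega)}{\min_{\tau\in\mathsf S_n}C(\tau,\boldsymbol\mu,\omega)}\le 4.$$
   Context: Appointment model: a sequence is a permutation $\tau\in\mathsf S_n$ of $\{1,\dots,n\}$, $\tau(i)$ being the patient in appointment slot $i$. A schedule is a vector $\boldsymbol x=(x_1,\dots,x_n)$, where $x_j$ is the interarrival time between patient $j$ and the next patient. Waiting times $W_i$ and idle times $I_i$ of slot $i$ are given by $W_1=I_1=0$ and $W_{i+1}=(W_i+B_{\tau(i)}-x_{\tau(i)})^+$, $I_{i+1}=(W_i+B_{\tau(i)}-x_{\tau(i)})^-$, where $a^+=\max\{0,a\}$, $a^-=\max\{0,-a\}$. The cost is $C(\tau,\boldsymbol x,\omega)=\omega\sum_{i=1}^n\mathbb E I_i+(1-\omega)\sum_{i=1}^n\mathbb E W_i$. The mean-based schedule is $\boldsymbol\mu=(\mu_1,\dots,\mu_n)$, and $\mathrm{Id}$ is the identity permutation. For random variables $A,B$, $A\le_{\mathrm{cx}}B$ means $\mathbb E\phi(A)\le\mathbb E\phi(B)$ for all convex $\phi:\mathbb R\to\mathbb R$ for which the expectations exist, and $A\le_{\mathrm{dil}}B$ means $A-\mathbb EA\le_{\mathrm{cx}}B-\mathbb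 EB$. *)

theory Defs
  imports "HOL-Probability.Probability" "HOL-Combinatorics.Permutations"
begin

definition cx_le :: "'a measure \<Rightarrow> ('a \<Rightarrow> real) \<Rightarrow> ('a \<Rightarrow> real) \<Rightarrow> bool" where
  "cx_le M X Y \<longleftrightarrow>
     (\<forall>\<phi> :: real \<Rightarrow> real. convex_on UNIV \<phi> \<longrightarrow>
        integrable M (\<lambda>s. \<phi> (X s)) \<longrightarrow> integrable M (\<lambda>s. \<phi> (Y s)) \<longrightarrow>
        (\<integral>s. \<phi> (X s) \<partial>M) \<le> (\<integral>s. \<phi> (Y s) \<partial>M))"

definition dil_le :: "'a measure \<Rightarrow> ('a \<Rightarrow> real) \<Rightarrow> ('a \<Rightarrow> real) \<Rightarrow> bool" where
  "dil_le M X Y \<longleftrightarrow>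
     cx_le M (\<lambda>s. X s - (\<integral>t. X t \<partial>M)) (\<lambda>s. Y s - (\<integral>t. Y t \<partial>M))"

text \<open>Index shift: wait tau x B k s is W_{k+1} (slot k+1),
  so wait tau x B 0 = W_1 = 0 and
  W_{k+2} = (W_{k+1} + B_{tau(k+1)} - x_{tau(k+1)})^+,
  I_{k+2} = (W_{k+1} + B_{tau(k+1)} - x_{tau(k+1)})^-.\<close>
fun wait :: "(nat \<Rightarrow> nat) \<Rightarrow> (nat \<Rightarrow> real) \<Rightarrow> (nat \<Rightarrow> 'a \<Rightarrow> real) \<Rightarrow> nat \<Rightarrow> 'a \<Rightarrow> real" where
  "wait \<tau> x B 0 s = 0"
| "wait \<tau> x B (Suc k) s = max 0 (wait \<tau> x B k s + B (\<tau> (Suc k)) s - x (\<tau> (Suc k)))"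

fun idle :: "(nat \<Rightarrow> nat) \<Rightarrow> (nat \<Rightarrow> real) \<Rightarrow> (nat \<Rightarrow> 'a \<Rightarrow> real) \<Rightarrow> nat \<Rightarrow> 'a \<Rightarrow> real" where
  "idle \<tau> x B 0 s = 0"
| "idle \<tau> x B (Suc k) s = max 0 (- (wait \<tau> x B k s + B (\<tau> (Suc k)) s - x (\<tau> (Suc k))))"

definition cost :: "'a measure \<Rightarrow> (nat \<Rightarrow> 'a \<Rightarrow> real) \<Rightarrow> nat \<Rightarrow> (nat \<Rightarrow> nat) \<Rightarrow> (nat \<Rightarrow> real) \<Rightarrow> real \<Rightarrow> real" where
  "cost M B n \<tau> x w =
     w * (\<Sum>i=1..n. \<integral>s. idle \<tau> x B (i - 1) s \<partial>M)
     + (1 - w) * (\<Sum>i=1..n. \<integral>s. wait \<tau> x B (i - 1) s \<partial>M)"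

definition mean_sched :: "'a measure \<Rightarrow> (nat \<Rightarrow> 'a \<Rightarrow> real) \<Rightarrow> nat \<Rightarrow> real" where
  "mean_sched M B j = (\<integral>s. B j s \<partial>M)"

end

theory Submission
  imports Defs
begin

(* Under the mean-based schedule the idle times telescope (the net arrivals B_i - mu_i have
   mean zero), so C(tau, mu, w) = w E W_n + (1 - w) (E W_1 + ... + E W_n), and it suffices to
   show E W_(k+1) <= 4 E W'_(k+1) slot by slot, where W is for the identity sequence and W' for
   an arbitrary tau.  By Lindley's recursion W_(k+1) is the largest partial sum
   Y_(j+1) + ... + Y_k of the centred service times Y_i = B_i - mu_i.

   Lower bound: W'_(k+1) >= (Y_tau(1) + ... + Y_tau(k))^+.  The dilation order makes the
   stop-loss transforms z |-> E (z + Y_i)^+ increase in i, so by independence, exchanging one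
   index at a time for a smaller one, E (Y_tau(1) + ... + Y_tau(k))^+ >= E S_k^+ with
   S_k = Y_1 + ... + Y_k.

   Upper bound: E max_j (Y_(j+1) + ... + Y_k) <= 4 E S_k^+.  Subtracting an independent copy
   Y'_i can only increase the expected maximum (Jensen, since E Y'_i = 0); the walk of
   Y_i - Y'_i is symmetric, so Levy's reflection principle bounds its maximum by twice its
   endpoint in distribution; and E (S_k - S'_k)^+ <= E S_k^+ + E S'_k^+ = 2 E S_k^+. *)

section \<open>Maximal partial sums\<close>

definition max_partial_sum :: "nat \<Rightarrow> (nat \<Rightarrow> real) \<Rightarrow> real" where
  "max_partial_sum k v = Max ((\<lambda>j. \<Sum>i\<in>{j<..k}. v i) ` {..k})"

lemma max_partial_sum_nonneg: "0 \<le> max_partial_sum k v"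
proof -
  have "(\<Sum>i\<in>{k<..k}. v i) \<le> max_partial_sum k v"
    unfolding max_partial_sum_def by (rule Max_ge[OF _ imageI]) simp_all
  then show ?thesis by simp
qed

lemma pos_partial_sum_le_max_partial_sum: "max 0 (\<Sum>i\<in>{0<..k}. v i) \<le> max_partial_sum k v"
proof -
  have "(\<Sum>i\<in>{0<..k}. v i) \<le> max_partial_sum k v"
    unfolding max_partial_sum_def by (rule Max_ge[OF _ imageI]) simp_all
  with max_partial_sum_nonneg show ?thesis by simp
qed

lemma max_partial_sum_cong:
  "(\<And>i. i \<in> {0<..k} \<Longrightarrow> v i = w i) \<Longrightarrow> max_partial_sum k v = max_partial_sum k w"
  unfolding max_partial_sum_def by (intro arg_cong[where f = Max] image_cong refl sum.cong) auto

lemma partial_sum_split: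
  fixes v :: "nat \<Rightarrow> real"
  assumes "j \<le> k"
  shows "(\<Sum>i\<in>{0<..k}. v i) = (\<Sum>i\<in>{0<..j}. v i) + (\<Sum>i\<in>{j<..k}. v i)"
proof -
  from assms have "{0<..k} = {0<..j} \<union> {j<..k}" by auto
  then show ?thesis by (simp add: sum.union_disjoint)
qed

definition last_exceedance :: "nat \<Rightarrow> real \<Rightarrow> nat \<Rightarrow> (nat \<Rightarrow> real) \<Rightarrow> bool" where
  "last_exceedance k t j v \<longleftrightarrow>
     t < (\<Sum>i\<in>{j<..k}. v i) \<and> (\<forall>l\<in>{j<..k}. (\<Sum>i\<in>{l<..k}. v i) \<le> t)"

lemma max_partial_sum_gt_iff:
  assumes "0 \<le> t"
  shows "t < max_partial_sum k v \<longleftrightarrow> (\<exists>j<k. last_exceedance k t j v)"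
proof
  assume "t < max_partial_sum k v"
  then have "\<exists>j\<le>k. t < (\<Sum>i\<in>{j<..k}. v i)"
    unfolding max_partial_sum_def by (subst (asm) Max_gr_iff) auto
  then have ne: "{j. j \<le> k \<and> t < (\<Sum>i\<in>{j<..k}. v i)} \<noteq> {}" by auto
  define m where "m = Max {j. j \<le> k \<and> t < (\<Sum>i\<in>{j<..k}. v i)}"
  have m: "m \<le> k" "t < (\<Sum>i\<in>{m<..k}. v i)"
    using Max_in[OF _ ne] by (auto simp: m_def)
  with assms have "m < k" by (cases "m = k") auto
  moreover have "(\<Sum>i\<in>{l<..k}. v i) \<le> t" if "l \<in> {m<..k}" for l
  proof (rule ccontr)
    assume "\<not> (\<Sum>i\<in>{l<..k}. v i) \<le> t"
    with that have "l \<le> m" unfolding m_def by (intro Max_ge) auto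
    with that show False by simp
  qed
  ultimately show "\<exists>j<k. last_exceedance k t j v"
    using m by (auto simp: last_exceedance_def)
next
  assume "\<exists>j<k. last_exceedance k t j v"
  then obtain j where "j < k" "t < (\<Sum>i\<in>{j<..k}. v i)"
    by (auto simp: last_exceedance_def)
  moreover have "(\<Sum>i\<in>{j<..k}. v i) \<le> max_partial_sum k v"
    using \<open>j < k\<close> unfolding max_partial_sum_def by (intro Max_ge) auto
  ultimately show "t < max_partial_sum k v" by linarith
qed

lemma last_exceedance_unique:
  assumes "last_exceedance k t j v" "last_exceedance k t j' v" "j \<le> k" "j' \<le> k"
  shows "j = j'"
proof -
  have "\<not> i < i'" if "last_exceedance k t i v" "last_exceedance k t i' v" "i' \<le> k" for i i'
  proof
    assume "i < i'"
    with that have "(\<Sum>l\<in>{i'<..k}. v l) \<le> t" "t < (\<Sum>l\<in>{i'<..k}. v l)"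
      by (auto simp: last_exceedance_def)
    then show False by simp
  qed
  with assms show ?thesis by (meson linorder_neqE_nat)
qed

lemma measurable_max_partial_sum:
  assumes "k \<le> n"
  shows "max_partial_sum k \<in> borel_measurable (PiM {1..n} (\<lambda>_. borel))"
  unfolding max_partial_sum_def[abs_def] using assms
  by (intro borel_measurable_Max borel_measurable_sum measurable_component_singleton) auto

lemma integrable_max_partial_sum:
  assumes "\<And>i. i \<in> {0<..k} \<Longrightarrow> integrable N (\<lambda>x. f x i)"
  shows "integrable N (\<lambda>x. max_partial_sum k (f x))"
  unfolding max_partial_sum_def using assms
  by (intro integrable_MAX Bochner_Integration.integrable_sum) auto

section \<open>Lindley's recursion\<close>

lemma wait_nonneg: "0 \<le> wait \<tau> x B k s"
  by (cases k) auto

lemma partial_sum_le_wait: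
  "j \<le> k \<Longrightarrow> (\<Sum>i\<in>{j<..k}. B (\<tau> i) s - x (\<tau> i)) \<le> wait \<tau> x B k s"
proof (induction k arbitrary: j)
  case (Suc k)
  show ?case
  proof (cases "j = Suc k")
    case False
    with Suc.prems have "j \<le> k" by simp
    then have "{j<..Suc k} = insert (Suc k) {j<..k}" by auto
    with Suc.IH[OF \<open>j \<le> k\<close>] show ?thesis by simp
  qed (simp add: wait_nonneg del: wait.simps)
qed simp

lemma wait_eq_partial_sum: "\<exists>j\<le>k. wait \<tau> x B k s = (\<Sum>i\<in>{j<..k}. B (\<tau> i) s - x (\<tau> i))"
proof (induction k)
  case (Suc k)
  then obtain j where j: "j \<le> k" "wait \<tau> x B k s = (\<Sum>i\<in>{j<..k}. B (\<tau> i) s - x (\<tau> i))"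
    by blast
  show ?case
  proof (cases "wait \<tau> x B k s + B (\<tau> (Suc k)) s - x (\<tau> (Suc k)) \<le> 0")
    case True
    then show ?thesis by (intro exI[of _ "Suc k"]) simp
  next
    case False
    have "{j<..Suc k} = insert (Suc k) {j<..k}" using j(1) by auto
    with False j show ?thesis by (intro exI[of _ j]) simp
  qed
qed simp

lemma wait_eq_max_partial_sum:
  "wait \<tau> x B k s = max_partial_sum k (\<lambda>i. B (\<tau> i) s - x (\<tau> i))"
proof -
  from wait_eq_partial_sum[of k \<tau> x B s] obtain j
    where j: "j \<le> k" "wait \<tau> x B k s = (\<Sum>i\<in>{j<..k}. B (\<tau> i) s - x (\<tau> i))"
    by blast
  show ?thesis
    unfolding max_partial_sum_def
  proof (rule Max_eqI[symmetric])
    show "wait \<tau> x B k s \<in> (\<lambda>j. \<Sum>i\<in>{j<..k}. B (\<tau> i) s - x (\<tau> i)) ` {..k}"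
      using j by auto
  qed (auto intro: partial_sum_le_wait)
qed

lemma wait_Suc_minus_idle_Suc:
  "wait \<tau> x B (Suc k) s - idle \<tau> x B (Suc k) s = wait \<tau> x B k s + B (\<tau> (Suc k)) s - x (\<tau> (Suc k))"
  by simp

section \<open>Expectations of maxima, independence and tails\<close>

lemma Max_integral_le_integral_Max:
  fixes f :: "'i \<Rightarrow> 'a \<Rightarrow> real"
  assumes "finite J" "J \<noteq> {}" "\<And>j. j \<in> J \<Longrightarrow> integrable N (f j)"
  shows "Max ((\<lambda>j. \<integral>x. f j x \<partial>N) ` J) \<le> (\<integral>x. Max ((\<lambda>j. f j x) ` J) \<partial>N)"
  using assms by (subst Max_le_iff) (auto intro!: integral_mono integrable_MAX Max_ge)

lemma (in prob_space) integral_indep_var_nested: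
  fixes f :: "real \<times> real \<Rightarrow> real"
  assumes indep: "indep_var borel Z borel Y"
    and f[measurable]: "f \<in> borel_measurable (borel \<Otimes>\<^sub>M borel)"
    and int: "integrable M (\<lambda>s. f (Z s, Y s))"
  shows "integrable (distr M borel Z) (\<lambda>z. \<integral>s. f (z, Y s) \<partial>M)"
    and "(\<integral>s. f (Z s, Y s) \<partial>M) = (\<integral>z. (\<integral>s. f (z, Y s) \<partial>M) \<partial>distr M borel Z)"
proof -
  have [measurable]: "random_variable borel Z" "random_variable borel Y"
    using indep by (auto simp: indep_var_distribution_eq)
  have joint: "distr M borel Z \<Otimes>\<^sub>M distr M borel Y = distr M (borel \<Otimes>\<^sub>M borel) (\<lambda>s. (Z s, Y s))"
    using indep by (simp add: indep_var_distribution_eq)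
  interpret P: pair_sigma_finite "distr M borel Z" "distr M borel Y"
    by (intro pair_sigma_finite.intro prob_space_imp_sigma_finite prob_space_distr) simp_all
  have int_joint: "integrable (distr M borel Z \<Otimes>\<^sub>M distr M borel Y) f"
    unfolding joint by (subst integrable_distr_eq) (simp_all add: int)
  have inner: "(\<integral>y. f (z, y) \<partial>distr M borel Y) = (\<integral>s. f (z, Y s) \<partial>M)" for z
    by (subst integral_distr) simp_all
  show "integrable (distr M borel Z) (\<lambda>z. \<integral>s. f (z, Y s) \<partial>M)"
    using P.integrable_fst'[OF int_joint] by (simp add: inner)
  have "(\<integral>s. f (Z s, Y s) \<partial>M) = integral\<^sup>L (distr M borel Z \<Otimes>\<^sub>M distr M borel Y) f"
    unfolding joint by (subst integral_distr) simp_all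
  also have "\<dots> = (\<integral>z. (\<integral>s. f (z, Y s) \<partial>M) \<partial>distr M borel Z)"
    using P.integral_fst'[OF int_joint] by (simp add: inner)
  finally show "(\<integral>s. f (Z s, Y s) \<partial>M) = (\<integral>z. (\<integral>s. f (z, Y s) \<partial>M) \<partial>distr M borel Z)" .
qed

lemma (in prob_space) integral_indep_var_mono:
  fixes f :: "real \<times> real \<Rightarrow> real"
  assumes "indep_var borel Z borel Y" "indep_var borel Z borel Y'"
    and "f \<in> borel_measurable (borel \<Otimes>\<^sub>M borel)"
    and "integrable M (\<lambda>s. f (Z s, Y s))" "integrable M (\<lambda>s. f (Z s, Y' s))"
    and "\<And>z. (\<integral>s. f (z, Y s) \<partial>M) \<le> (\<integral>s. f (z, Y' s) \<partial>M)"
  shows "(\<integral>s. f (Z s, Y s) \<partial>M) \<le> (\<integral>s. f (Z s, Y' s) \<partial>M)"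
  using assms integral_indep_var_nested[of Z Y f] integral_indep_var_nested[of Z Y' f]
  by (simp add: integral_mono)

lemma (in product_sigma_finite) product_integral_fold_mono:
  fixes f g :: "_ \<Rightarrow> real"
  assumes IJ: "I \<inter> J = {}" and fin: "finite I" "finite J"
    and f: "integrable (Pi\<^sub>M (I \<union> J) M) f" and g: "integrable (Pi\<^sub>M (I \<union> J) M) g"
    and le: "\<And>x. x \<in> space (Pi\<^sub>M I M) \<Longrightarrow>
       (\<integral>y. f (merge I J (x, y)) \<partial>Pi\<^sub>M J M) \<le> (\<integral>y. g (merge I J (x, y)) \<partial>Pi\<^sub>M J M)"
  shows "integral\<^sup>L (Pi\<^sub>M (I \<union> J) M) f \<le> integral\<^sup>L (Pi\<^sub>M (I \<union> J) M) g"
proof -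
  interpret I: finite_product_sigma_finite M I by standard fact
  interpret J: finite_product_sigma_finite M J by standard fact
  interpret P: pair_sigma_finite "Pi\<^sub>M I M" "Pi\<^sub>M J M" ..
  have f_int: "integrable (Pi\<^sub>M I M \<Otimes>\<^sub>M Pi\<^sub>M J M) (\<lambda>x. f (merge I J x))"
    by (rule integrable_distr[OF measurable_merge]) (simp add: distr_merge[OF IJ fin] f)
  have g_int: "integrable (Pi\<^sub>M I M \<Otimes>\<^sub>M Pi\<^sub>M J M) (\<lambda>x. g (merge I J x))"
    by (rule integrable_distr[OF measurable_merge]) (simp add: distr_merge[OF IJ fin] g)
  have "integral\<^sup>L (Pi\<^sub>M (I \<union> J) M) f = (\<integral>x. (\<integral>y. f (merge I J (x, y)) \<partial>Pi\<^sub>M J M) \<partial>Pi\<^sub>M I M)"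
    by (rule product_integral_fold[OF IJ fin f])
  also have "\<dots> \<le> (\<integral>x. (\<integral>y. g (merge I J (x, y)) \<partial>Pi\<^sub>M J M) \<partial>Pi\<^sub>M I M)"
    using P.integrable_fst'[OF f_int] P.integrable_fst'[OF g_int] le
    by (intro integral_mono_AE) (auto intro!: AE_I2)
  also have "\<dots> = integral\<^sup>L (Pi\<^sub>M (I \<union> J) M) g"
    by (rule product_integral_fold[OF IJ fin g, symmetric])
  finally show ?thesis .
qed

lemma nn_integral_layer_cake:
  fixes h :: "'a \<Rightarrow> real"
  assumes sf: "sigma_finite_measure N" and hm[measurable]: "h \<in> borel_measurable N"
    and nonneg: "\<And>x. x \<in> space N \<Longrightarrow> 0 \<le> h x"
  shows "(\<integral>\<^sup>+x. ennreal (h x) \<partial>N) = (\<integral>\<^sup>+t. indicator {0..} t * emeasure N {x\<in>space N. t < h x} \<partial>lborel)"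
proof -
  interpret P: pair_sigma_finite N lborel
    by (intro pair_sigma_finite.intro sf) (simp add: lborel.sigma_finite_measure_axioms)
  let ?f = "\<lambda>x t. indicator {p. 0 \<le> snd p \<and> snd p < h (fst p)} (x, t) :: ennreal"
  have fm: "case_prod ?f \<in> borel_measurable (N \<Otimes>\<^sub>M lborel)" by measurable
  have "(\<integral>\<^sup>+x. ennreal (h x) \<partial>N) = (\<integral>\<^sup>+x. (\<integral>\<^sup>+t. ?f x t \<partial>lborel) \<partial>N)"
  proof (rule nn_integral_cong)
    fix x assume x: "x \<in> space N"
    have "(\<integral>\<^sup>+t. ?f x t \<partial>lborel) = (\<integral>\<^sup>+t. indicator {0..<h x} t \<partial>lborel)"
      by (intro nn_integral_cong) (auto simp: indicator_def)
    also have "\<dots> = ennreal (h x)" using nonneg[OF x] by simp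
    finally show "ennreal (h x) = (\<integral>\<^sup>+t. ?f x t \<partial>lborel)" by simp
  qed
  also have "\<dots> = (\<integral>\<^sup>+t. (\<integral>\<^sup>+x. ?f x t \<partial>N) \<partial>lborel)"
    by (rule P.Fubini'[OF fm, symmetric])
  also have "\<dots> = (\<integral>\<^sup>+t. indicator {0..} t * emeasure N {x\<in>space N. t < h x} \<partial>lborel)"
  proof (rule nn_integral_cong)
    fix t :: real
    have "(\<integral>\<^sup>+x. ?f x t \<partial>N) = (\<integral>\<^sup>+x. indicator {0..} t * indicator {x\<in>space N. t < h x} x \<partial>N)"
      by (intro nn_integral_cong) (auto simp: indicator_def)
    also have "\<dots> = indicator {0..} t * emeasure N {x\<in>space N. t < h x}"
      by (subst nn_integral_cmult) simp_all
    finally show "(\<integral>\<^sup>+x. ?f x t \<partial>N) = indicator {0..} t * emeasure N {x\<in>space N. t < h x}" .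
  qed
  finally show ?thesis .
qed

lemma integral_le_of_tail_le:
  fixes g h :: "'a \<Rightarrow> real"
  assumes P: "prob_space N" and gi: "integrable N g" and hi: "integrable N h"
    and g0: "\<And>x. x \<in> space N \<Longrightarrow> 0 \<le> g x" and h0: "\<And>x. x \<in> space N \<Longrightarrow> 0 \<le> h x"
    and tail: "\<And>t. 0 \<le> t \<Longrightarrow> measure N {x\<in>space N. t < g x} \<le> c * measure N {x\<in>space N. t < h x}"
    and c: "0 \<le> c"
  shows "integral\<^sup>L N g \<le> c * integral\<^sup>L N h"
proof -
  interpret prob_space N by (rule P)
  have gm[measurable]: "g \<in> borel_measurable N" using gi by auto
  have hm[measurable]: "h \<in> borel_measurable N" using hi by auto
  have "ennreal (integral\<^sup>L N g) = (\<integral>\<^sup>+x. ennreal (g x) \<partial>N)"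
    using gi g0 by (intro nn_integral_eq_integral[symmetric]) (auto intro!: AE_I2)
  also have "\<dots> = (\<integral>\<^sup>+t. indicator {0..} t * emeasure N {x\<in>space N. t < g x} \<partial>lborel)"
    by (rule nn_integral_layer_cake) (auto simp: g0 sigma_finite_measure_axioms)
  also have "\<dots> \<le> (\<integral>\<^sup>+t. ennreal c * (indicator {0..} t * emeasure N {x\<in>space N. t < h x}) \<partial>lborel)"
  proof (rule nn_integral_mono)
    fix t :: real
    show "indicator {0..} t * emeasure N {x\<in>space N. t < g x} \<le> ennreal c * (indicator {0..} t * emeasure N {x\<in>space N. t < h x})"
    proof (cases "0 \<le> t")
      case True
      have "emeasure N {x\<in>space N. t < g x} = ennreal (measure N {x\<in>space N. t < g x})"
        by (simp add: emeasure_eq_measure)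
      also have "\<dots> \<le> ennreal (c * measure N {x\<in>space N. t < h x})"
        using tail[OF True] by (rule ennreal_leI)
      also have "\<dots> = ennreal c * emeasure N {x\<in>space N. t < h x}"
        using c by (simp add: emeasure_eq_measure ennreal_mult)
      finally show ?thesis using True by (simp add: indicator_def)
    qed (simp add: indicator_def)
  qed
  also have "\<dots> = ennreal c * (\<integral>\<^sup>+t. indicator {0..} t * emeasure N {x\<in>space N. t < h x} \<partial>lborel)"
    by (rule nn_integral_cmult) measurable
  also have "\<dots> = ennreal c * (\<integral>\<^sup>+x. ennreal (h x) \<partial>N)"
    by (subst nn_integral_layer_cake) (auto simp: h0 sigma_finite_measure_axioms)
  also have "\<dots> = ennreal c * ennreal (integral\<^sup>L N h)"
    using hi h0 by (subst nn_integral_eq_integral) (auto intro!: AE_I2)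
  also have "\<dots> = ennreal (c * integral\<^sup>L N h)"
  proof -
    have "0 \<le> integral\<^sup>L N h" using h0 by (intro integral_nonneg_AE AE_I2) auto
    then show ?thesis using c by (simp add: ennreal_mult)
  qed
  finally show ?thesis
    using c hi h0 by (subst (asm) ennreal_le_iff) (auto intro!: mult_nonneg_nonneg integral_nonneg_AE)
qed

section \<open>Stop-loss order of sums of independent variables\<close>

lemma convex_on_max_zero_shift: "convex_on UNIV (\<lambda>v::real. max 0 (z + v))"
proof (rule convex_onI)
  fix t x y :: real
  assume t: "0 < t" "t < 1"
  have "z + ((1 - t) *\<^sub>R x + t *\<^sub>R y) = (1 - t) * (z + x) + t * (z + y)"
    by (simp add: algebra_simps)
  moreover have "(1 - t) * (z + x) \<le> (1 - t) * max 0 (z + x)" "t * (z + y) \<le> t * max 0 (z + y)"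
    using t by (intro mult_left_mono; simp)+
  moreover have "0 \<le> (1 - t) * max 0 (z + x)" "0 \<le> t * max 0 (z + y)"
    using t by simp_all
  ultimately show "max 0 (z + ((1 - t) *\<^sub>R x + t *\<^sub>R y)) \<le> (1 - t) * max 0 (z + x) + t * max 0 (z + y)"
    by simp
qed simp

lemma dil_le_imp_stop_loss_le:
  assumes "prob_space M" "dil_le M X Y" "integrable M X" "integrable M Y"
  shows "(\<integral>s. max 0 (z + (X s - (\<integral>t. X t \<partial>M))) \<partial>M) \<le> (\<integral>s. max 0 (z + (Y s - (\<integral>t. Y t \<partial>M))) \<partial>M)"
proof -
  interpret prob_space M by fact
  have "integrable M (\<lambda>s. max 0 (z + (X s - (\<integral>t. X t \<partial>M))))"
    "integrable M (\<lambda>s. max 0 (z + (Y s - (\<integral>t. Y t \<partial>M))))"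
    using assms(3,4) by auto
  with assms(2) convex_on_max_zero_shift[of z] show ?thesis
    unfolding dil_le_def cx_le_def by blast
qed

locale indep_family = prob_space M for M :: "'a measure" +
  fixes Y :: "nat \<Rightarrow> 'a \<Rightarrow> real" and n :: nat
  assumes indep_Y: "indep_vars (\<lambda>_. borel) Y {1..n}"
    and integrable_Y: "\<And>i. i \<in> {1..n} \<Longrightarrow> integrable M (Y i)"
begin

lemma indep_var_sum_single:
  assumes "A \<subseteq> {1..n}" "i \<in> {1..n}" "i \<notin> A"
  shows "indep_var borel (\<lambda>s. \<Sum>l\<in>A. Y l s) borel (Y i)"
proof -
  have "indep_var (PiM A (\<lambda>_. borel)) (\<lambda>s. restrict (\<lambda>l. Y l s) A)
      (PiM {i} (\<lambda>_. borel)) (\<lambda>s. restrict (\<lambda>l. Y l s) {i})"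
    using assms by (intro indep_var_restrict[OF indep_Y]) auto
  then have "indep_var borel ((\<lambda>f. \<Sum>l\<in>A. f l) \<circ> (\<lambda>s. restrict (\<lambda>l. Y l s) A))
      borel ((\<lambda>f. f i) \<circ> (\<lambda>s. restrict (\<lambda>l. Y l s) {i}))"
    by (rule indep_var_compose) measurable
  moreover have "(\<lambda>f. \<Sum>l\<in>A. f l) \<circ> (\<lambda>s. restrict (\<lambda>l. Y l s) A) = (\<lambda>s. \<Sum>l\<in>A. Y l s)"
    by (auto simp: fun_eq_iff intro!: sum.cong)
  ultimately show ?thesis
    by (simp add: comp_def)
qed

end

locale stop_loss_increasing_family = indep_family +
  assumes stop_loss_le_Suc:
    "\<And>i z. i \<in> {1..<n} \<Longrightarrow> (\<integral>s. max 0 (z + Y i s) \<partial>M) \<le> (\<integral>s. max 0 (z + Y (Suc i) s) \<partial>M)"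
begin

lemma stop_loss_mono:
  assumes "1 \<le> i" "i \<le> j" "j \<le> n"
  shows "(\<integral>s. max 0 (z + Y i s) \<partial>M) \<le> (\<integral>s. max 0 (z + Y j s) \<partial>M)"
  using assms(2,3)
proof (induction j rule: dec_induct)
  case (step j)
  with assms(1) stop_loss_le_Suc[of j z] show ?case by simp
qed simp

lemma stop_loss_sum_exchange:
  assumes S: "S \<subseteq> {1..n}" and "j \<in> S" "i \<in> {1..n}" "i \<notin> S" "i \<le> j"
  shows "(\<integral>s. max 0 (\<Sum>l\<in>insert i (S - {j}). Y l s) \<partial>M) \<le> (\<integral>s. max 0 (\<Sum>l\<in>S. Y l s) \<partial>M)"
proof -
  let ?Z = "\<lambda>s. \<Sum>l\<in>S - {j}. Y l s"
  have "finite S" using S finite_subset by blast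
  with assms have sums: "(\<Sum>l\<in>insert i (S - {j}). Y l s) = ?Z s + Y i s"
    "(\<Sum>l\<in>S. Y l s) = ?Z s + Y j s" for s
    by (simp_all add: sum.remove add.commute)
  have "integrable M ?Z"
    using S by (intro Bochner_Integration.integrable_sum integrable_Y) auto
  with assms integrable_Y[of i] integrable_Y[of j]
  have "integrable M (\<lambda>s. max 0 (?Z s + Y i s))" "integrable M (\<lambda>s. max 0 (?Z s + Y j s))"
    by auto
  moreover have "(\<integral>s. max 0 (z + Y i s) \<partial>M) \<le> (\<integral>s. max 0 (z + Y j s) \<partial>M)" for z
    using assms by (intro stop_loss_mono) auto
  moreover have "indep_var borel ?Z borel (Y i)" "indep_var borel ?Z borel (Y j)"
    using assms by (auto intro!: indep_var_sum_single)
  ultimately show ?thesis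
    using integral_indep_var_mono[of ?Z "Y i" "Y j" "\<lambda>p. max 0 (fst p + snd p)"]
    by (simp add: sums)
qed

text \<open>Exchanging the elements of \<open>S\<close> outside \<open>{1..k}\<close> one at a time
  for the missing smaller indices.\<close>
lemma stop_loss_initial_sum_le:
  assumes "S \<subseteq> {1..n}" "card S = k"
  shows "(\<integral>s. max 0 (\<Sum>l\<in>{1..k}. Y l s) \<partial>M) \<le> (\<integral>s. max 0 (\<Sum>l\<in>S. Y l s) \<partial>M)"
  using assms
proof (induction "card (S - {1..k})" arbitrary: S rule: less_induct)
  case less
  have finS: "finite S" using less.prems finite_subset by blast
  show ?case
  proof (cases "S = {1..k}")
    case False
    have "\<not> S \<subseteq> {1..k}"
    proof
      assume "S \<subseteq> {1..k}"
      then have "S = {1..k}" using less.prems by (intro card_subset_eq) auto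
      with False show False ..
    qed
    then obtain j where j: "j \<in> S" "j \<notin> {1..k}" by blast
    have "\<not> {1..k} \<subseteq> S"
    proof
      assume "{1..k} \<subseteq> S"
      then have "{1..k} = S" using less.prems finS by (intro card_subset_eq) auto
      with False show False by simp
    qed
    then obtain i where i: "i \<in> {1..k}" "i \<notin> S" by blast
    have "k \<le> n" using less.prems card_mono[of "{1..n}" S] by auto
    define S' where "S' = insert i (S - {j})"
    have S': "S' \<subseteq> {1..n}" "card S' = k"
      using less.prems i j finS \<open>k \<le> n\<close> by (auto simp: S'_def card_insert_if)
    have "S' - {1..k} = (S - {1..k}) - {j}"
      using i by (auto simp: S'_def)
    with j finS have "card (S' - {1..k}) < card (S - {1..k})"
      by (metis DiffI card_Diff1_less finite_Diff)
    from less.hyps[OF this S']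
    have "(\<integral>s. max 0 (\<Sum>l\<in>{1..k}. Y l s) \<partial>M) \<le> (\<integral>s. max 0 (\<Sum>l\<in>S'. Y l s) \<partial>M)" .
    also have "\<dots> \<le> (\<integral>s. max 0 (\<Sum>l\<in>S. Y l s) \<partial>M)"
      unfolding S'_def using less.prems i j \<open>k \<le> n\<close> by (intro stop_loss_sum_exchange) auto
    finally show ?thesis .
  qed simp
qed

end

section \<open>A maximal inequality for independent centred variables\<close>

definition symmetrization :: "(bool \<times> nat \<Rightarrow> real) \<Rightarrow> nat \<Rightarrow> real" where
  "symmetrization \<omega> i = \<omega> (True, i) - \<omega> (False, i)"

definition flip_upto :: "nat \<Rightarrow> bool \<times> nat \<Rightarrow> bool \<times> nat" where
  "flip_upto j \<kappa> = (if snd \<kappa> \<le> j then (\<not> fst \<kappa>, snd \<kappa>) else \<kappa>)"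

locale centered_indep_family = indep_family +
  assumes random_variable_Y: "\<And>i. Y i \<in> borel_measurable M"
    and integral_Y: "\<And>i. i \<in> {1..n} \<Longrightarrow> (\<integral>s. Y i s \<partial>M) = 0"
begin

definition law :: "nat \<Rightarrow> real measure" where
  "law i = distr M borel (Y i)"

text \<open>Two independent copies of the family: coordinate \<open>(True, i)\<close> of the first,
  \<open>(False, i)\<close> of the second copy of \<open>Y i\<close>.\<close>
definition copies :: "(bool \<times> nat \<Rightarrow> real) measure" where
  "copies = PiM (UNIV \<times> {1..n}) (\<lambda>\<kappa>. law (snd \<kappa>))"

definition swap_copies :: "nat \<Rightarrow> (bool \<times> nat \<Rightarrow> real) \<Rightarrow> bool \<times> nat \<Rightarrow> real" where
  "swap_copies j \<omega> = (\<lambda>\<kappa>\<in>UNIV \<times> {1..n}. \<omega> (flip_upto j \<kappa>))"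

lemma prob_space_law: "prob_space (law i)"
  unfolding law_def using random_variable_Y by (rule prob_space_distr)

lemma sets_law [simp, measurable_cong]: "sets (law i) = sets borel"
  by (simp add: law_def)

lemma measurable_law_iff: "measurable N (law i) = measurable N borel"
  by (rule measurable_cong_sets) simp_all

lemma prob_space_copies: "prob_space copies"
  unfolding copies_def by (intro prob_space_PiM prob_space_law)

lemma measurable_coordinate [measurable]: "(\<lambda>\<omega>. \<omega> \<kappa>) \<in> borel_measurable copies"
proof (cases "\<kappa> \<in> UNIV \<times> {1..n}")
  case True
  then have "(\<lambda>\<omega>. \<omega> \<kappa>) \<in> measurable copies (law (snd \<kappa>))"
    unfolding copies_def by (rule measurable_component_singleton)
  then show ?thesis by (simp only: measurable_law_iff)
next
  case False
  then have "\<omega> \<kappa> = undefined" if "\<omega> \<in> space copies" for \<omega>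
    using that by (auto simp: copies_def space_PiM intro: PiE_arb)
  then show ?thesis by (subst measurable_cong[where g = "\<lambda>_. undefined"]) simp_all
qed

lemma
  assumes "\<kappa> \<in> K" "snd \<kappa> \<in> {1..n}"
  shows integrable_PiM_law_coordinate: "integrable (PiM K (\<lambda>\<kappa>. law (snd \<kappa>))) (\<lambda>\<omega>. \<omega> \<kappa>)"
    and integral_PiM_law_coordinate: "(\<integral>\<omega>. \<omega> \<kappa> \<partial>PiM K (\<lambda>\<kappa>. law (snd \<kappa>))) = 0"
proof -
  let ?P = "PiM K (\<lambda>\<kappa>. law (snd \<kappa>))" and ?i = "snd \<kappa>"
  have "distr ?P (law ?i) (\<lambda>\<omega>. \<omega> \<kappa>) = law ?i"
    using assms(1) by (intro distr_PiM_component prob_space_law)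
  moreover have coord: "(\<lambda>\<omega>. \<omega> \<kappa>) \<in> measurable ?P (law ?i)"
    using assms(1) by (rule measurable_component_singleton)
  moreover have id: "(\<lambda>v::real. v) \<in> borel_measurable (law ?i)"
    by (rule measurable_ident_sets) simp
  ultimately have "integrable ?P (\<lambda>\<omega>. \<omega> \<kappa>) \<longleftrightarrow> integrable (law ?i) (\<lambda>v. v)"
    and "(\<integral>\<omega>. \<omega> \<kappa> \<partial>?P) = (\<integral>v. v \<partial>law ?i)"
    using integrable_distr_eq[OF coord id] integral_distr[OF coord id] by simp_all
  moreover have "integrable (law ?i) (\<lambda>v. v) \<longleftrightarrow> integrable M (Y ?i)"
    and "(\<integral>v. v \<partial>law ?i) = (\<integral>s. Y ?i s \<partial>M)"
    unfolding law_def using random_variable_Y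
    by (simp_all add: integrable_distr_eq integral_distr)
  ultimately show "integrable ?P (\<lambda>\<omega>. \<omega> \<kappa>)" "(\<integral>\<omega>. \<omega> \<kappa> \<partial>?P) = 0"
    using assms(2) integrable_Y integral_Y by simp_all
qed

lemma
  assumes "k \<le> n" "{b} \<times> {j<..k} \<subseteq> K"
  shows integrable_PiM_law_partial_sum:
      "integrable (PiM K (\<lambda>\<kappa>. law (snd \<kappa>))) (\<lambda>\<omega>. \<Sum>i\<in>{j<..k}. \<omega> (b, i))"
    and integral_PiM_law_partial_sum:
      "(\<integral>\<omega>. (\<Sum>i\<in>{j<..k}. \<omega> (b, i)) \<partial>PiM K (\<lambda>\<kappa>. law (snd \<kappa>))) = 0"
proof -
  let ?P = "PiM K (\<lambda>\<kappa>. law (snd \<kappa>))"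
  have coord: "(b, i) \<in> K" "snd (b, i) \<in> {1..n}" if "i \<in> {j<..k}" for i
    using that assms by auto
  show "integrable ?P (\<lambda>\<omega>. \<Sum>i\<in>{j<..k}. \<omega> (b, i))"
    using integrable_PiM_law_coordinate[OF coord] by auto
  have "(\<integral>\<omega>. (\<Sum>i\<in>{j<..k}. \<omega> (b, i)) \<partial>?P) = (\<Sum>i\<in>{j<..k}. \<integral>\<omega>. \<omega> (b, i) \<partial>?P)"
    using integrable_PiM_law_coordinate[OF coord] by (rule Bochner_Integration.integral_sum)
  also have "\<dots> = 0"
    using integral_PiM_law_coordinate[OF coord] by simp
  finally show "(\<integral>\<omega>. (\<Sum>i\<in>{j<..k}. \<omega> (b, i)) \<partial>?P) = 0" .
qed

lemma integrable_copies_partial_sum: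
  "k \<le> n \<Longrightarrow> integrable copies (\<lambda>\<omega>. \<Sum>i\<in>{j<..k}. \<omega> (b, i))"
  unfolding copies_def by (rule integrable_PiM_law_partial_sum) auto

lemma integral_copies_partial_sum:
  "k \<le> n \<Longrightarrow> (\<integral>\<omega>. (\<Sum>i\<in>{j<..k}. \<omega> (b, i)) \<partial>copies) = 0"
  unfolding copies_def by (rule integral_PiM_law_partial_sum) auto

lemma integrable_copies_symmetrization_sum:
  "k \<le> n \<Longrightarrow> integrable copies (\<lambda>\<omega>. \<Sum>i\<in>{j<..k}. symmetrization \<omega> i)"
  by (simp add: symmetrization_def sum_subtractf integrable_copies_partial_sum)

lemma distr_Y_eq_PiM_law:
  assumes "n \<noteq> 0"
  shows "distr M (PiM {1..n} (\<lambda>_. borel)) (\<lambda>s. \<lambda>i\<in>{1..n}. Y i s) = PiM {1..n} law"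
  using indep_vars_iff_distr_eq_PiM'[where I = "{1..n}" and X = Y and M' = "\<lambda>_. borel"]
    assms indep_Y random_variable_Y
  by (simp add: law_def[abs_def])

lemma distr_copy_eq_PiM_law:
  "distr copies (PiM {1..n} law) (\<lambda>\<omega>. \<lambda>i\<in>{1..n}. \<omega> (b, i)) = PiM {1..n} law"
  using distr_PiM_reindex[of "UNIV \<times> {1..n}" "\<lambda>\<kappa>. law (snd \<kappa>)" "Pair b" "{1..n}"]
  unfolding copies_def by (simp add: prob_space_law inj_on_def)

lemma integral_copy:
  fixes F :: "(nat \<Rightarrow> real) \<Rightarrow> real"
  assumes "n \<noteq> 0" and F: "F \<in> borel_measurable (PiM {1..n} (\<lambda>_. borel))"
  shows "(\<integral>\<omega>. F (\<lambda>i\<in>{1..n}. \<omega> (b, i)) \<partial>copies) = (\<integral>s. F (\<lambda>i\<in>{1..n}. Y i s) \<partial>M)"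
proof -
  have sets_eq: "sets (PiM {1..n} law) = sets (PiM {1..n} (\<lambda>_. borel))"
    by (intro sets_PiM_cong) simp_all
  have F': "F \<in> borel_measurable (PiM {1..n} law)"
    using F by (simp only: measurable_cong_sets[OF sets_eq refl])
  have Y: "(\<lambda>s. \<lambda>i\<in>{1..n}. Y i s) \<in> measurable M (PiM {1..n} (\<lambda>_. borel))"
    using random_variable_Y by measurable
  have copy: "(\<lambda>\<omega>. \<lambda>i\<in>{1..n}. \<omega> (b, i)) \<in> measurable copies (PiM {1..n} law)"
    unfolding copies_def by (rule measurable_restrict) auto
  show ?thesis
    using integral_distr[OF copy F', unfolded distr_copy_eq_PiM_law]
      integral_distr[OF Y F, unfolded distr_Y_eq_PiM_law[OF \<open>n \<noteq> 0\<close>]]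
    by simp
qed

lemma measurable_swap_copies: "swap_copies j \<in> measurable copies copies"
  unfolding swap_copies_def copies_def
proof (rule measurable_restrict)
  fix \<kappa> :: "bool \<times> nat"
  have "snd (flip_upto j \<kappa>) = snd \<kappa>" by (simp add: flip_upto_def)
  then show "(\<lambda>\<omega>. \<omega> (flip_upto j \<kappa>)) \<in> measurable (PiM (UNIV \<times> {1..n}) (\<lambda>\<kappa>. law (snd \<kappa>))) (law (snd \<kappa>))"
    using measurable_coordinate[of "flip_upto j \<kappa>"] by (simp add: copies_def measurable_law_iff)
qed

lemma distr_swap_copies: "distr copies copies (swap_copies j) = copies"
proof -
  have "inj_on (flip_upto j) (UNIV \<times> {1..n})" "flip_upto j \<in> UNIV \<times> {1..n} \<rightarrow> UNIV \<times> {1..n}"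
    by (auto simp: inj_on_def flip_upto_def split: if_splits)
  moreover have "law (snd (flip_upto j \<kappa>)) = law (snd \<kappa>)" for \<kappa>
    by (simp add: flip_upto_def)
  ultimately show ?thesis
    using distr_PiM_reindex[of "UNIV \<times> {1..n}" "\<lambda>\<kappa>. law (snd \<kappa>)" "flip_upto j" "UNIV \<times> {1..n}"]
    unfolding copies_def swap_copies_def by (simp add: prob_space_law)
qed

lemma measure_swap_copies_vimage:
  "S \<in> sets copies \<Longrightarrow> measure copies (swap_copies j -` S \<inter> space copies) = measure copies S"
  using measure_distr[OF measurable_swap_copies, of S j] by (simp add: distr_swap_copies)

lemma symmetrization_swap_copies:
  "i \<in> {1..n} \<Longrightarrow> symmetrization (swap_copies j \<omega>) i
    = (if i \<le> j then - symmetrization \<omega> i else symmetrization \<omega> i)"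
  by (simp add: symmetrization_def swap_copies_def flip_upto_def)

lemma measurable_symmetrization [measurable]:
  "(\<lambda>\<omega>. symmetrization \<omega> i) \<in> borel_measurable copies"
  unfolding symmetrization_def by measurable

lemma partial_sum_swap_copies_above:
  assumes "k \<le> n" "j \<le> l"
  shows "(\<Sum>i\<in>{l<..k}. symmetrization (swap_copies j \<omega>) i) = (\<Sum>i\<in>{l<..k}. symmetrization \<omega> i)"
  using assms by (intro sum.cong) (auto simp: symmetrization_swap_copies)

lemma partial_sum_swap_copies_below:
  assumes "j \<le> n"
  shows "(\<Sum>i\<in>{0<..j}. symmetrization (swap_copies j \<omega>) i) = - (\<Sum>i\<in>{0<..j}. symmetrization \<omega> i)"
  using assms by (auto simp: symmetrization_swap_copies sum_negf[symmetric] intro: sum.cong)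

lemma last_exceedance_swap_copies:
  "k \<le> n \<Longrightarrow> last_exceedance k t j (symmetrization (swap_copies j \<omega>))
    \<longleftrightarrow> last_exceedance k t j (symmetrization \<omega>)"
  by (simp add: last_exceedance_def partial_sum_swap_copies_above)

text \<open>Reflecting the first \<open>j\<close> coordinates of the symmetrized walk fixes the event
  that \<open>j\<close> is the last exceedance of \<open>t\<close>, but flips the sign of its partial sum up to \<open>j\<close>.\<close>
lemma measure_last_exceedance_le:
  assumes "j < k" "k \<le> n"
  shows "measure copies {\<omega>\<in>space copies. last_exceedance k t j (symmetrization \<omega>)}
    \<le> 2 * measure copies {\<omega>\<in>space copies. last_exceedance k t j (symmetrization \<omega>)
                                \<and> 0 \<le> (\<Sum>i\<in>{0<..j}. symmetrization \<omega> i)}"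
    (is "measure copies ?A \<le> 2 * measure copies ?E")
proof -
  interpret C: prob_space copies by (rule prob_space_copies)
  let ?E' = "{\<omega>\<in>space copies. last_exceedance k t j (symmetrization \<omega>)
                             \<and> (\<Sum>i\<in>{0<..j}. symmetrization \<omega> i) \<le> 0}"
  have [measurable]: "?E \<in> sets copies" "?E' \<in> sets copies"
    unfolding last_exceedance_def by measurable
  have "swap_copies j -` ?E \<inter> space copies = ?E'"
    using assms measurable_space[OF measurable_swap_copies]
    by (auto simp: last_exceedance_swap_copies partial_sum_swap_copies_below)
  then have "measure copies ?E' = measure copies ?E"
    using measure_swap_copies_vimage[of ?E j] by simp
  moreover have "?A = ?E \<union> ?E'" by auto
  then have "measure copies ?A \<le> measure copies ?E + measure copies ?E'"
    by (simp add: measure_subadditive C.emeasure_finite)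
  ultimately show ?thesis by simp
qed

lemma integrable_symmetrization:
  "i \<in> {1..n} \<Longrightarrow> integrable copies (\<lambda>\<omega>. symmetrization \<omega> i)"
  unfolding symmetrization_def copies_def
  by (intro Bochner_Integration.integrable_diff integrable_PiM_law_coordinate) auto

lemma integrable_max_partial_sum_symmetrization:
  "k \<le> n \<Longrightarrow> integrable copies (\<lambda>\<omega>. max_partial_sum k (symmetrization \<omega>))"
  by (intro integrable_max_partial_sum integrable_symmetrization) auto

lemma integrable_max_partial_sum_copy:
  "k \<le> n \<Longrightarrow> integrable copies (\<lambda>\<omega>. max_partial_sum k (\<lambda>i. \<omega> (b, i)))"
  unfolding copies_def by (intro integrable_max_partial_sum integrable_PiM_law_coordinate) auto

lemma levy_inequality:
  assumes "k \<le> n" "0 \<le> t"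
  shows "measure copies {\<omega>\<in>space copies. t < max_partial_sum k (symmetrization \<omega>)}
    \<le> 2 * measure copies {\<omega>\<in>space copies. t < max 0 (\<Sum>i\<in>{0<..k}. symmetrization \<omega> i)}"
proof -
  interpret C: prob_space copies by (rule prob_space_copies)
  define A where "A j = {\<omega>\<in>space copies. last_exceedance k t j (symmetrization \<omega>)}" for j
  define E where "E j = {\<omega>\<in>A j. 0 \<le> (\<Sum>i\<in>{0<..j}. symmetrization \<omega> i)}" for j
  have events_sets [measurable]: "A j \<in> sets copies" "E j \<in> sets copies" for j
    unfolding A_def E_def last_exceedance_def by measurable
  have disj_A: "disjoint_family_on A {..<k}"
    by (auto simp: disjoint_family_on_def A_def dest: last_exceedance_unique)
  then have disj_E: "disjoint_family_on E {..<k}"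
    by (auto simp: disjoint_family_on_def E_def)
  have events: "{\<omega>\<in>space copies. t < max_partial_sum k (symmetrization \<omega>)} = (\<Union>j\<in>{..<k}. A j)"
    using assms(2) by (auto simp: A_def max_partial_sum_gt_iff)
  have "measure copies {\<omega>\<in>space copies. t < max_partial_sum k (symmetrization \<omega>)}
      = (\<Sum>j<k. measure copies (A j))"
    unfolding events using disj_A by (intro C.finite_measure_finite_Union) auto
  also have "\<dots> \<le> (\<Sum>j<k. 2 * measure copies (E j))"
    using assms(1) by (intro sum_mono) (simp add: A_def E_def measure_last_exceedance_le)
  also have "\<dots> = 2 * measure copies (\<Union>j\<in>{..<k}. E j)"
    using disj_E by (subst C.finite_measure_finite_Union) (auto simp: sum_distrib_left events_sets)
  also have "\<dots> \<le> 2 * measure copies {\<omega>\<in>space copies. t < max 0 (\<Sum>i\<in>{0<..k}. symmetrization \<omega> i)}"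
  proof -
    have "t < max 0 (\<Sum>i\<in>{0<..k}. symmetrization \<omega> i)" if "\<omega> \<in> E j" "j < k" for \<omega> j
      using that partial_sum_split[of j k "symmetrization \<omega>"]
      by (auto simp: E_def A_def last_exceedance_def)
    then show ?thesis
      by (intro mult_left_mono C.finite_measure_mono) (auto simp: E_def A_def)
  qed
  finally show ?thesis .
qed

lemma integral_max_partial_sum_symmetrization_le:
  assumes "k \<le> n"
  shows "(\<integral>\<omega>. max_partial_sum k (symmetrization \<omega>) \<partial>copies)
    \<le> 2 * (\<integral>\<omega>. max 0 (\<Sum>i\<in>{0<..k}. symmetrization \<omega> i) \<partial>copies)"
  using assms
  by (intro integral_le_of_tail_le[OF prob_space_copies] integrable_max_partial_sum_symmetrization
      integrable_max integrable_copies_symmetrization_sum levy_inequality)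
     (auto simp: max_partial_sum_nonneg)

text \<open>Jensen's inequality for the maximum: the subtracted vector has mean zero.\<close>
lemma max_partial_sum_le_integral_minus_copy:
  assumes "k \<le> n"
  shows "max_partial_sum k v
    \<le> (\<integral>y. max_partial_sum k (\<lambda>i. v i - y (False, i)) \<partial>PiM ({False} \<times> {1..n}) (\<lambda>\<kappa>. law (snd \<kappa>)))"
proof -
  let ?P = "PiM ({False} \<times> {1..n}) (\<lambda>\<kappa>. law (snd \<kappa>))"
  interpret P: prob_space ?P
    by (intro prob_space_PiM prob_space_law)
  let ?c = "\<lambda>j. \<Sum>i\<in>{j<..k}. v i" and ?S = "\<lambda>j y. \<Sum>i\<in>{j<..k}. y (False, i)"
  have S: "integrable ?P (?S j)" "(\<integral>y. ?S j y \<partial>?P) = 0" for j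
    using assms by (intro integrable_PiM_law_partial_sum integral_PiM_law_partial_sum; auto)+
  have "(\<integral>y. ?c j - ?S j y \<partial>?P) = ?c j" for j
    using Bochner_Integration.integral_diff[OF P.integrable_const S(1)] S(2) P.prob_space by simp
  then have "max_partial_sum k v = Max ((\<lambda>j. \<integral>y. ?c j - ?S j y \<partial>?P) ` {..k})"
    unfolding max_partial_sum_def by (simp only:)
  also have "\<dots> \<le> (\<integral>y. Max ((\<lambda>j. ?c j - ?S j y) ` {..k}) \<partial>?P)"
    using S(1) by (intro Max_integral_le_integral_Max Bochner_Integration.integrable_diff P.integrable_const) auto
  also have "\<dots> = (\<integral>y. max_partial_sum k (\<lambda>i. v i - y (False, i)) \<partial>?P)"
    unfolding max_partial_sum_def by (simp only: sum_subtractf)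
  finally show ?thesis .
qed

lemma integral_max_partial_sum_copy_le:
  assumes "k \<le> n"
  shows "(\<integral>\<omega>. max_partial_sum k (\<lambda>i. \<omega> (True, i)) \<partial>copies)
    \<le> (\<integral>\<omega>. max_partial_sum k (symmetrization \<omega>) \<partial>copies)"
proof -
  let ?T = "{True} \<times> {1..n}" and ?F = "{False} \<times> {1..n}" and ?law = "\<lambda>\<kappa>. law (snd \<kappa>)"
  interpret P: product_prob_space ?law UNIV
    by (intro product_prob_spaceI prob_space_law)
  interpret F: prob_space "PiM ?F ?law"
    by (intro prob_space_PiM prob_space_law)
  have split: "copies = PiM (?T \<union> ?F) ?law"
    unfolding copies_def by (rule arg_cong2[where f = PiM]) auto
  have "integral\<^sup>L (PiM (?T \<union> ?F) ?law) (\<lambda>\<omega>. max_partial_sum k (\<lambda>i. \<omega> (True, i)))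
      \<le> integral\<^sup>L (PiM (?T \<union> ?F) ?law) (\<lambda>\<omega>. max_partial_sum k (symmetrization \<omega>))"
  proof (rule P.product_integral_fold_mono)
    show "integrable (PiM (?T \<union> ?F) ?law) (\<lambda>\<omega>. max_partial_sum k (\<lambda>i. \<omega> (True, i)))"
      "integrable (PiM (?T \<union> ?F) ?law) (\<lambda>\<omega>. max_partial_sum k (symmetrization \<omega>))"
      unfolding split[symmetric] using assms
      by (simp_all add: integrable_max_partial_sum_copy integrable_max_partial_sum_symmetrization)
    fix x :: "bool \<times> nat \<Rightarrow> real"
    have "max_partial_sum k (\<lambda>i. merge ?T ?F (x, y) (True, i)) = max_partial_sum k (\<lambda>i. x (True, i))"
      "max_partial_sum k (symmetrization (merge ?T ?F (x, y)))
        = max_partial_sum k (\<lambda>i. x (True, i) - y (False, i))" for y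
      using assms by (auto intro!: max_partial_sum_cong simp: merge_def symmetrization_def)
    then show "(\<integral>y. max_partial_sum k (\<lambda>i. merge ?T ?F (x, y) (True, i)) \<partial>PiM ?F ?law)
        \<le> (\<integral>y. max_partial_sum k (symmetrization (merge ?T ?F (x, y))) \<partial>PiM ?F ?law)"
      using max_partial_sum_le_integral_minus_copy[OF assms, of "\<lambda>i. x (True, i)"] F.prob_space
      by simp
  qed auto
  then show ?thesis unfolding split .
qed

lemma integral_max_partial_sum_copy_eq:
  assumes "k \<le> n" "n \<noteq> 0"
  shows "(\<integral>\<omega>. max_partial_sum k (\<lambda>i. \<omega> (b, i)) \<partial>copies) = (\<integral>s. max_partial_sum k (\<lambda>i. Y i s) \<partial>M)"
proof -
  have "max_partial_sum k (restrict v {1..n}) = max_partial_sum k v" for v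
    using assms(1) by (intro max_partial_sum_cong) auto
  then show ?thesis
    using integral_copy[OF assms(2) measurable_max_partial_sum[OF assms(1)], of b] by simp
qed

lemma integral_pos_partial_sum_copy_eq:
  assumes "k \<le> n" "n \<noteq> 0"
  shows "(\<integral>\<omega>. max 0 (\<Sum>i\<in>{0<..k}. \<omega> (b, i)) \<partial>copies) = (\<integral>s. max 0 (\<Sum>i\<in>{0<..k}. Y i s) \<partial>M)"
proof -
  let ?F = "\<lambda>v :: nat \<Rightarrow> real. max 0 (\<Sum>i\<in>{0<..k}. v i)"
  have "?F \<in> borel_measurable (PiM {1..n} (\<lambda>_. borel))"
    using assms(1) by (intro borel_measurable_max borel_measurable_const borel_measurable_sum
        measurable_component_singleton) auto
  moreover have "?F (restrict v {1..n}) = ?F v" for v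
    using assms(1) by (auto intro!: sum.cong)
  ultimately show ?thesis
    using integral_copy[OF assms(2), of ?F b] by simp
qed

lemma integral_pos_symmetrization_sum_le:
  assumes "k \<le> n" "n \<noteq> 0"
  shows "(\<integral>\<omega>. max 0 (\<Sum>i\<in>{0<..k}. symmetrization \<omega> i) \<partial>copies)
    \<le> 2 * (\<integral>s. max 0 (\<Sum>i\<in>{0<..k}. Y i s) \<partial>M)"
proof -
  let ?S = "\<lambda>b \<omega>. \<Sum>i\<in>{0<..k}. \<omega> (b, i)"
  have int: "integrable copies (?S b)" "integrable copies (\<lambda>\<omega>. max 0 (?S b \<omega>))" for b
    using assms(1) by (auto intro: integrable_copies_partial_sum)
  have "max 0 (\<Sum>i\<in>{0<..k}. symmetrization \<omega> i) \<le> max 0 (?S True \<omega>) + max 0 (?S False \<omega>) - ?S False \<omega>"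
    for \<omega>
    by (simp add: symmetrization_def sum_subtractf max_def)
  then have "(\<integral>\<omega>. max 0 (\<Sum>i\<in>{0<..k}. symmetrization \<omega> i) \<partial>copies)
      \<le> (\<integral>\<omega>. max 0 (?S True \<omega>) + max 0 (?S False \<omega>) - ?S False \<omega> \<partial>copies)"
    using assms(1) int by (intro integral_mono integrable_max integrable_copies_symmetrization_sum) auto
  also have "\<dots> = (\<integral>\<omega>. max 0 (?S True \<omega>) \<partial>copies) + (\<integral>\<omega>. max 0 (?S False \<omega>) \<partial>copies)"
    using int assms(1) by (simp add: integral_copies_partial_sum)
  also have "\<dots> = 2 * (\<integral>s. max 0 (\<Sum>i\<in>{0<..k}. Y i s) \<partial>M)"
    using assms by (simp add: integral_pos_partial_sum_copy_eq)
  finally show ?thesis .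
qed

theorem integral_max_partial_sum_le:
  assumes "k \<le> n"
  shows "(\<integral>s. max_partial_sum k (\<lambda>i. Y i s) \<partial>M) \<le> 4 * (\<integral>s. max 0 (\<Sum>i\<in>{1..k}. Y i s) \<partial>M)"
proof (cases "k = 0")
  case True
  then show ?thesis by (simp add: max_partial_sum_def)
next
  case False
  with assms have "n \<noteq> 0" by simp
  have "{0<..k} = {1..k}" by auto
  have "(\<integral>s. max_partial_sum k (\<lambda>i. Y i s) \<partial>M)
      = (\<integral>\<omega>. max_partial_sum k (\<lambda>i. \<omega> (True, i)) \<partial>copies)"
    using assms \<open>n \<noteq> 0\<close> by (simp add: integral_max_partial_sum_copy_eq)
  also have "\<dots> \<le> (\<integral>\<omega>. max_partial_sum k (symmetrization \<omega>) \<partial>copies)"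
    using assms by (rule integral_max_partial_sum_copy_le)
  also have "\<dots> \<le> 2 * (\<integral>\<omega>. max 0 (\<Sum>i\<in>{0<..k}. symmetrization \<omega> i) \<partial>copies)"
    using assms by (rule integral_max_partial_sum_symmetrization_le)
  also have "\<dots> \<le> 4 * (\<integral>s. max 0 (\<Sum>i\<in>{0<..k}. Y i s) \<partial>M)"
    using integral_pos_symmetrization_sum_le[OF assms \<open>n \<noteq> 0\<close>] by simp
  finally show ?thesis
    using \<open>{0<..k} = {1..k}\<close> by simp
qed

end

section \<open>The mean-based schedule\<close>

locale service_times = prob_space M for M :: "'a measure" +
  fixes B :: "nat \<Rightarrow> 'a \<Rightarrow> real" and n :: nat
  assumes indep_B: "indep_vars (\<lambda>_. borel) B {1..n}"
    and integrable_B: "\<And>i. i \<in> {1..n} \<Longrightarrow> integrable M (B i)"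
begin

text \<open>Outside the patients \<open>{1..n}\<close> the service times are arbitrary, possibly
  non-measurable functions, hence the truncation to \<open>0\<close>.\<close>
definition centered :: "nat \<Rightarrow> 'a \<Rightarrow> real" where
  "centered i s = (if i \<in> {1..n} then B i s - mean_sched M B i else 0)"

sublocale centered_indep_family M centered n
proof
  have "indep_vars (\<lambda>_. borel) (\<lambda>i s. B i s - mean_sched M B i) {1..n}"
    using indep_vars_compose2[OF indep_B, of "\<lambda>i v. v - mean_sched M B i" "\<lambda>_. borel"] by simp
  then show "indep_vars (\<lambda>_. borel) centered {1..n}"
    by (rule indep_vars_cong[THEN iffD1, rotated 3]) (simp_all add: centered_def fun_eq_iff)
  show "integrable M (centered i)" if "i \<in> {1..n}" for i
    using that integrable_B[OF that] by (simp add: centered_def[abs_def])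
  then show "centered i \<in> borel_measurable M" for i
    by (cases "i \<in> {1..n}") (auto simp: centered_def[abs_def])
  show "(\<integral>s. centered i s \<partial>M) = 0" if "i \<in> {1..n}" for i
    using that integrable_B[OF that] by (simp add: centered_def mean_sched_def prob_space)
qed

lemma wait_mean_sched_eq_max_partial_sum:
  assumes "\<And>i. i \<in> {1..k} \<Longrightarrow> \<tau> i \<in> {1..n}"
  shows "wait \<tau> (mean_sched M B) B k s = max_partial_sum k (\<lambda>i. centered (\<tau> i) s)"
  unfolding wait_eq_max_partial_sum using assms
  by (intro max_partial_sum_cong) (auto simp: centered_def)

lemma integrable_wait:
  "(\<And>i. i \<in> {1..k} \<Longrightarrow> \<tau> i \<in> {1..n}) \<Longrightarrow> integrable M (wait \<tau> x B k)"
proof (induction k)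
  case (Suc k)
  then have "integrable M (wait \<tau> x B k)" "integrable M (B (\<tau> (Suc k)))"
    by (auto intro: integrable_B)
  then show ?case
    by (simp add: wait.simps(2)[abs_def])
qed (simp add: wait.simps(1)[abs_def])

lemma sum_integral_idle_mean_sched:
  assumes "\<tau> permutes {1..n}" "m < n"
  shows "(\<Sum>k\<le>m. \<integral>s. idle \<tau> (mean_sched M B) B k s \<partial>M) = (\<integral>s. wait \<tau> (mean_sched M B) B m s \<partial>M)"
  using assms(2)
proof (induction m)
  case (Suc m)
  let ?x = "mean_sched M B"
  have \<tau>: "\<tau> i \<in> {1..n}" if "i \<in> {1..Suc m}" for i
    using that Suc.prems permutes_in_image[OF assms(1)] by auto
  have "idle \<tau> ?x B (Suc m) s = wait \<tau> ?x B (Suc m) s - wait \<tau> ?x B m s - centered (\<tau> (Suc m)) s" for s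
    using wait_Suc_minus_idle_Suc[of \<tau> ?x B m s] \<tau>[of "Suc m"] by (simp add: centered_def)
  then have "(\<integral>s. idle \<tau> ?x B (Suc m) s \<partial>M)
      = (\<integral>s. wait \<tau> ?x B (Suc m) s - wait \<tau> ?x B m s - centered (\<tau> (Suc m)) s \<partial>M)"
    by simp
  also have "\<dots> = (\<integral>s. wait \<tau> ?x B (Suc m) s \<partial>M) - (\<integral>s. wait \<tau> ?x B m s \<partial>M)"
    using \<tau> integrable_wait[of "Suc m" \<tau> ?x] integrable_wait[of m \<tau> ?x]
      integrable_Y[of "\<tau> (Suc m)"] integral_Y[of "\<tau> (Suc m)"]
    by (simp del: wait.simps)
  finally have "(\<integral>s. idle \<tau> ?x B (Suc m) s \<partial>M)
      = (\<integral>s. wait \<tau> ?x B (Suc m) s \<partial>M) - (\<integral>s. wait \<tau> ?x B m s \<partial>M)" .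
  with Suc show ?case by (simp del: wait.simps idle.simps)
qed (simp add: wait.simps(1)[abs_def] idle.simps(1)[abs_def])

lemma cost_mean_sched_eq:
  assumes "\<tau> permutes {1..n}" "n \<noteq> 0"
  shows "cost M B n \<tau> (mean_sched M B) w = w * (\<integral>s. wait \<tau> (mean_sched M B) B (n - 1) s \<partial>M)
     + (1 - w) * (\<Sum>k\<le>n - 1. \<integral>s. wait \<tau> (mean_sched M B) B k s \<partial>M)"
proof -
  have shift: "(\<Sum>i=1..n. f (i - 1)) = (\<Sum>k\<le>n - 1. f k)" for f :: "nat \<Rightarrow> real"
    using assms(2) by (intro sum.reindex_bij_witness[where i = Suc and j = "\<lambda>i. i - 1"]) auto
  have "(\<Sum>k\<le>n - 1. \<integral>s. idle \<tau> (mean_sched M B) B k s \<partial>M)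
      = (\<integral>s. wait \<tau> (mean_sched M B) B (n - 1) s \<partial>M)"
    using assms by (intro sum_integral_idle_mean_sched) auto
  then show ?thesis
    using shift[of "\<lambda>k. \<integral>s. idle \<tau> (mean_sched M B) B k s \<partial>M"]
      shift[of "\<lambda>k. \<integral>s. wait \<tau> (mean_sched M B) B k s \<partial>M"]
    by (simp add: cost_def)
qed

lemma cost_mean_sched_nonneg:
  assumes "\<tau> permutes {1..n}" "n \<noteq> 0" "0 \<le> w" "w \<le> 1"
  shows "0 \<le> cost M B n \<tau> (mean_sched M B) w"
  using assms by (simp add: cost_mean_sched_eq wait_nonneg sum_nonneg)

end

locale dilation_ordered_service_times = service_times +
  assumes dil_le_B: "\<And>i. i \<in> {1..<n} \<Longrightarrow> dil_le M (B i) (B (Suc i))"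
begin

sublocale stop_loss_increasing_family M centered n
proof intro_locales
  show "stop_loss_increasing_family_axioms M centered n"
  proof
    fix i z
    assume i: "i \<in> {1..<n}"
    then have "i \<in> {1..n}" "Suc i \<in> {1..n}" by auto
    with dil_le_imp_stop_loss_le[OF prob_space_axioms dil_le_B[OF i] integrable_B integrable_B, of z]
    show "(\<integral>s. max 0 (z + centered i s) \<partial>M) \<le> (\<integral>s. max 0 (z + centered (Suc i) s) \<partial>M)"
      by (simp add: centered_def mean_sched_def)
  qed
qed

lemma integral_wait_id_le:
  assumes "\<tau> permutes {1..n}" "k \<le> n"
  shows "(\<integral>s. wait id (mean_sched M B) B k s \<partial>M) \<le> 4 * (\<integral>s. wait \<tau> (mean_sched M B) B k s \<partial>M)"
proof -
  have \<tau>: "\<tau> i \<in> {1..n}" if "i \<in> {1..k}" for i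
    using that assms permutes_in_image[OF assms(1)] by auto
  have inj: "inj_on \<tau> {1..k}"
    using permutes_inj[OF assms(1)] by (auto intro: inj_on_subset)
  have "wait id (mean_sched M B) B k s = max_partial_sum k (\<lambda>i. centered i s)" for s
    using assms(2) by (subst wait_mean_sched_eq_max_partial_sum) auto
  then have "(\<integral>s. wait id (mean_sched M B) B k s \<partial>M) = (\<integral>s. max_partial_sum k (\<lambda>i. centered i s) \<partial>M)"
    by simp
  also have "\<dots> \<le> 4 * (\<integral>s. max 0 (\<Sum>i\<in>{1..k}. centered i s) \<partial>M)"
    using assms(2) by (rule integral_max_partial_sum_le)
  also have "\<dots> \<le> 4 * (\<integral>s. max 0 (\<Sum>i\<in>\<tau> ` {1..k}. centered i s) \<partial>M)"
    using \<tau> inj by (intro mult_left_mono stop_loss_initial_sum_le) (auto simp: card_image)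
  also have "\<dots> = 4 * (\<integral>s. max 0 (\<Sum>i\<in>{0<..k}. centered (\<tau> i) s) \<partial>M)"
    using inj by (simp add: sum.reindex atLeastSucAtMost_greaterThanAtMost)
  also have "\<dots> \<le> 4 * (\<integral>s. wait \<tau> (mean_sched M B) B k s \<partial>M)"
  proof -
    have "max 0 (\<Sum>i\<in>{0<..k}. centered (\<tau> i) s) \<le> wait \<tau> (mean_sched M B) B k s" for s
      using \<tau> pos_partial_sum_le_max_partial_sum
      by (subst wait_mean_sched_eq_max_partial_sum) auto
    moreover have "integrable M (\<lambda>s. max 0 (\<Sum>i\<in>{0<..k}. centered (\<tau> i) s))"
      using \<tau> by (intro integrable_max Bochner_Integration.integrable_sum integrable_Y) auto
    ultimately show ?thesis
      using integrable_wait[of k \<tau> "mean_sched M B"] \<tau> by (intro mult_left_mono integral_mono) auto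
  qed
  finally show ?thesis .
qed

lemma cost_id_le:
  assumes "\<tau> permutes {1..n}" "n \<noteq> 0" "0 \<le> w" "w \<le> 1"
  shows "cost M B n id (mean_sched M B) w \<le> 4 * cost M B n \<tau> (mean_sched M B) w"
proof -
  let ?W = "\<lambda>\<tau> k. \<integral>s. wait \<tau> (mean_sched M B) B k s \<partial>M"
  have "w * ?W id (n - 1) \<le> w * (4 * ?W \<tau> (n - 1))"
    using assms by (intro mult_left_mono integral_wait_id_le) auto
  moreover have "(1 - w) * (\<Sum>k\<le>n - 1. ?W id k) \<le> (1 - w) * (4 * (\<Sum>k\<le>n - 1. ?W \<tau> k))"
    using assms unfolding sum_distrib_left by (intro mult_left_mono sum_mono integral_wait_id_le) auto
  ultimately show ?thesis
    using assms permutes_id[of "{1..n}"] by (simp add: cost_mean_sched_eq algebra_simps)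
qed

end

theorem theorem3p2:
  fixes M :: "'a measure" and B :: "nat \<Rightarrow> 'a \<Rightarrow> real" and n :: nat and w :: real
  assumes "prob_space M"
    and "n \<ge> 1"
    and "prob_space.indep_vars M (\<lambda>_. borel) B {1..n}"
    and "\<And>i. i \<in> {1..n} \<Longrightarrow> integrable M (B i)"
    and "\<And>i. i \<in> {1..n} \<Longrightarrow> integrable M (\<lambda>s. (B i s)\<^sup>2)"
    and "0 < w" and "w < 1"
    and "\<And>i. i \<in> {1..<n} \<Longrightarrow> dil_le M (B i) (B (Suc i))"
  shows "cost M B n id (mean_sched M B) w
           / Min ((\<lambda>\<tau>. cost M B n \<tau> (mean_sched M B) w) ` {\<tau>. \<tau> permutes {1..n}}) \<le> 4"
proof -
  have "dilation_ordered_service_times M B n"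
    using assms(1,3,4,8)
    by (simp add: dilation_ordered_service_times_def dilation_ordered_service_times_axioms_def
        service_times_def service_times_axioms_def)
  then interpret dilation_ordered_service_times M B n .
  let ?C = "\<lambda>\<tau>. cost M B n \<tau> (mean_sched M B) w"
  have "finite (?C ` {\<tau>. \<tau> permutes {1..n}})"
    by (simp add: finite_permutations)
  moreover have "?C ` {\<tau>. \<tau> permutes {1..n}} \<noteq> {}"
    using permutes_id by blast
  ultimately have "Min (?C ` {\<tau>. \<tau> permutes {1..n}}) \<in> ?C ` {\<tau>. \<tau> permutes {1..n}}"
    by (rule Min_in)
  then obtain \<tau> where \<tau>: "\<tau> permutes {1..n}" "Min (?C ` {\<tau>. \<tau> permutes {1..n}}) = ?C \<tau>"
    by blast
  have "?C id \<le> 4 * ?C \<tau>" "0 \<le> ?C \<tau>"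
    using \<tau>(1) assms(2,6,7) by (simp_all add: cost_id_le cost_mean_sched_nonneg)
  \<comment> \<open>If the optimal cost is \<open>0\<close>, the ratio is \<open>0\<close> because \<open>x / 0 = 0\<close>.\<close>
  then show ?thesis
    unfolding \<tau>(2) by (cases "?C \<tau> = 0") (simp_all add: divide_le_eq)
qed

end
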